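(* If $d$ is unknown, then any non-adaptive deterministic group testing algorithm on $n$ items that detects one defective item must make at least $\Omega(n)$ tests.
   Context: Group testing: items $X=[n]$, unknown defective set $I\subseteq X$ with $d=|I|$. A test $Q\subseteq X$ has answer $1$ if $Q\cap I\neq\emptyset$ and $0$ otherwise. A non-adaptive algorithm fixes all its tests in advance, then computes its output from the answers. "$d$ is unknown" means the algorithm gets no information about $|I|$ and must, for every nonempty defective set $I\subseteq[n]$, output an element of $I$. *)

theory Defs
  imports Complex_Main
begin

definition test_answer :: "nat set \<Rightarrow> nat set \<Rightarrow> bool" where
  "test_answer Q I \<longleftrightarrow> Q \<inter> I \<noteq> {}"

text \<open>A non-adaptive deterministic algorithm = a fixed list of tests plus a decoding
  function from the answer vector to an item.\<close>
definition nonadaptive_finds_defective ::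
    "nat \<Rightarrow> nat set list \<Rightarrow> (bool list \<Rightarrow> nat) \<Rightarrow> bool" where
  "nonadaptive_finds_defective n tests dec \<longleftrightarrow>
     (\<forall>Q\<in>set tests. Q \<subseteq> {1..n}) \<and>
     (\<forall>I. I \<subseteq> {1..n} \<and> I \<noteq> {} \<longrightarrow> dec (map (\<lambda>Q. test_answer Q I) tests) \<in> I)"

end

theory Submission
  imports Defs
begin

text \<open>Start from all \<open>n\<close> items and repeatedly delete the item the decoder names. On the
  smaller set the decoder must name a different item, so the answer vector changes; since deleting
  items can only turn positive tests negative, the set of positive tests shrinks strictly at each
  of the \<open>n - 1\<close> deletions. Hence there are at least \<open>n - 1\<close> tests.\<close>

definition positive_tests :: "nat set list \<Rightarrow> nat set \<Rightarrow> nat set" where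
  "positive_tests tests I = {j. j < length tests \<and> test_answer (tests ! j) I}"

lemma nonadaptive_finds_defectiveD:
  assumes "nonadaptive_finds_defective n tests dec" and "I \<subseteq> {1..n}" and "I \<noteq> {}"
  shows "dec (map (\<lambda>Q. test_answer Q I) tests) \<in> I"
  using assms unfolding nonadaptive_finds_defective_def by simp

lemma positive_tests_mono: "J \<subseteq> I \<Longrightarrow> positive_tests tests J \<subseteq> positive_tests tests I"
  unfolding positive_tests_def test_answer_def by blast

lemma card_positive_tests_le_length: "card (positive_tests tests I) \<le> length tests"
proof -
  have "positive_tests tests I \<subseteq> {..<length tests}"
    unfolding positive_tests_def by blast
  then show ?thesis
    using card_mono[of "{..<length tests}"] by simp
qed

lemma answers_eq_if_positive_tests_eq:
  assumes "positive_tests tests I = positive_tests tests J"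
  shows "map (\<lambda>Q. test_answer Q I) tests = map (\<lambda>Q. test_answer Q J) tests"
proof (rule nth_equalityI)
  fix i assume "i < length (map (\<lambda>Q. test_answer Q I) tests)"
  then show "map (\<lambda>Q. test_answer Q I) tests ! i = map (\<lambda>Q. test_answer Q J) tests ! i"
    using assms unfolding positive_tests_def by auto
qed simp

lemma positive_tests_Diff_decoded_psubset:
  assumes finds: "nonadaptive_finds_defective n tests dec"
    and I: "I \<subseteq> {1..n}"
    and x: "dec (map (\<lambda>Q. test_answer Q I) tests) = x"
    and nonempty: "I - {x} \<noteq> {}"
  shows "positive_tests tests (I - {x}) \<subset> positive_tests tests I"
proof
  show "positive_tests tests (I - {x}) \<subseteq> positive_tests tests I"
    by (rule positive_tests_mono) blast
  show "positive_tests tests (I - {x}) \<noteq> positive_tests tests I"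
  proof
    assume "positive_tests tests (I - {x}) = positive_tests tests I"
    then have "map (\<lambda>Q. test_answer Q (I - {x})) tests = map (\<lambda>Q. test_answer Q I) tests"
      by (rule answers_eq_if_positive_tests_eq)
    then have "dec (map (\<lambda>Q. test_answer Q (I - {x})) tests) = x"
      using x by (simp only:)
    moreover have "dec (map (\<lambda>Q. test_answer Q (I - {x})) tests) \<in> I - {x}"
      using finds I nonempty by (intro nonadaptive_finds_defectiveD) auto
    ultimately show False by simp
  qed
qed

lemma card_le_card_positive_tests:
  assumes finds: "nonadaptive_finds_defective n tests dec"
  shows "I \<subseteq> {1..n} \<Longrightarrow> I \<noteq> {} \<Longrightarrow> card I \<le> card (positive_tests tests I) + 1"
proof (induction "card I" arbitrary: I rule: less_induct)
  case less
  define x where "x = dec (map (\<lambda>Q. test_answer Q I) tests)"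
  have "finite I"
    using less.prems(1) finite_subset by blast
  show ?case
  proof (cases "I - {x} = {}")
    case True
    then have "I \<subseteq> {x}"
      by blast
    then have "card I \<le> 1"
      using card_mono[of "{x}" I] by simp
    then show ?thesis by simp
  next
    case False
    have "x \<in> I"
      using nonadaptive_finds_defectiveD[OF finds less.prems] unfolding x_def .
    then have card_Diff: "card (I - {x}) = card I - 1"
      by simp
    have "card (I - {x}) \<le> card (positive_tests tests (I - {x})) + 1"
    proof (rule less.hyps)
      show "card (I - {x}) < card I"
        using \<open>finite I\<close> \<open>x \<in> I\<close> by (rule card_Diff1_less)
      show "I - {x} \<subseteq> {1..n}"
        using less.prems(1) by blast
    qed fact
    moreover have "card (positive_tests tests (I - {x})) < card (positive_tests tests I)"
      using positive_tests_Diff_decoded_psubset[OF finds less.prems(1) x_def[symmetric] False]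
      by (rule psubset_card_mono[rotated]) (simp add: positive_tests_def)
    ultimately show ?thesis
      using card_Diff by linarith
  qed
qed

lemma nonadaptive_finds_defective_length_ge:
  assumes "nonadaptive_finds_defective n tests dec"
  shows "n \<le> length tests + 1"
proof (cases "n = 0")
  case False
  then have "card {1..n} \<le> card (positive_tests tests {1..n}) + 1"
    using card_le_card_positive_tests[OF assms, of "{1..n}"] by simp
  then show ?thesis
    using card_positive_tests_le_length[of tests "{1..n}"] by simp
qed simp

theorem theorem10:
  shows "\<exists>c::real>0. \<exists>N::nat. \<forall>n\<ge>N. \<forall>tests dec.
           nonadaptive_finds_defective n tests dec \<longrightarrow> real (length tests) \<ge> c * real n"
proof (intro exI[of _ "1/2"] conjI exI[of _ 2] allI impI)
  fix n :: nat and tests dec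
  assume "n \<ge> 2" and "nonadaptive_finds_defective n tests dec"
  then have "real n \<le> real (length tests) + 1" and "real n \<ge> 2"
    using nonadaptive_finds_defective_length_ge by force+
  then show "real (length tests) \<ge> 1/2 * real n"
    by linarith
qed simp

end
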